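(* Let $\Gamma\Rightarrow\Delta$ be a sequent provable in $\mathsf{Grz}_\infty$. Then for every finite set of formulas $\Lambda$, $\mathsf{Grz_{Seq}}\vdash\Lambda^\ast,\Gamma\Rightarrow\Delta$, where $\Lambda^\ast=\{\Box(A\to\Box A)\mid A\in\Lambda\}$.
   Context: Formulas are built from $\bot$ and atomic propositions using $\to$ and $\Box$. A sequent is $\Gamma\Rightarrow\Delta$ with $\Gamma,\Delta$ finite multisets of formulas; $\Box\Pi$ denotes the multiset $\{\Box B:B\in\Pi\}$. Common rules: $(\to_L)$ from $\Gamma,B\Rightarrow\Delta$ and $\Gamma\Rightarrow A,\Delta$ infer $\Gamma,A\to B\Rightarrow\Delta$; $(\to_R)$ from $\Gamma,A\Rightarrow B,\Delta$ infer $\Gamma\Rightarrow A\to B,\Delta$; $(\mathsf{refl})$ from $\Gamma,B,\Box B\Rightarrow\Delta$ infer $\Gamma,\Box B\Rightarrow\Delta$. The finite-proof calculus $\mathsf{Grz_{Seq}}$ has initial sequents $\Gamma,A\Rightarrow A,\Delta$ (any $A$) and $\Gamma,\bot\Rightarrow\Delta$, the rules $(\to_L),(\to_R),(\mathsf{refl})$ and $(\Box_{\mathsf{Grz}})$: from $\Box\Pi,\Box(A\to\Box A)\Rightarrow A$ infer $\Gamma,\Box\Pi\Rightarrow\Box A,\Delta$. The calculus $\mathsf{Grz}_\infty$ has initial sequents $\Gamma,p\Rightarrow p,\Delta$ ($p$ atomic) and $\Gamma,\bot\Rightarrow\Delta$, the rules $(\to_L),(\to_R),(\mathsf{refl})$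 and $(\Box)$: from left premise $\Gamma,\Box\Pi\Rightarrow A,\Delta$ and right premise $\Box\Pi\Rightarrow A$ infer $\Gamma,\Box\Pi\Rightarrow\Box A,\Delta$. Proofs in $\mathsf{Grz}_\infty$ are $\infty$-proofs: possibly infinite trees of sequents built by these rules, with leaves labelled by initial sequents, in which every infinite branch passes through a right premise of $(\Box)$ infinitely often; a sequent is provable if it labels the root of an $\infty$-proof. *)

theory Defs
  imports "HOL-Library.Multiset"
begin

datatype 'a fm = Bot | At 'a | Imp "'a fm" "'a fm" | Box "'a fm"

type_synonym 'a seq = "'a fm multiset \<times> 'a fm multiset"

inductive GrzSeq :: "'a seq \<Rightarrow> bool" where
  ax:    "GrzSeq (add_mset A \<Gamma>, add_mset A \<Delta>)"
| botL:  "GrzSeq (add_mset Bot \<Gamma>, \<Delta>)"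
| impL:  "GrzSeq (add_mset B \<Gamma>, \<Delta>) \<Longrightarrow> GrzSeq (\<Gamma>, add_mset A \<Delta>)
          \<Longrightarrow> GrzSeq (add_mset (Imp A B) \<Gamma>, \<Delta>)"
| impR:  "GrzSeq (add_mset A \<Gamma>, add_mset B \<Delta>) \<Longrightarrow> GrzSeq (\<Gamma>, add_mset (Imp A B) \<Delta>)"
| refl:  "GrzSeq (add_mset B (add_mset (Box B) \<Gamma>), \<Delta>) \<Longrightarrow> GrzSeq (add_mset (Box B) \<Gamma>, \<Delta>)"
| boxGrz: "GrzSeq (add_mset (Box (Imp A (Box A))) (image_mset Box \<Pi>), {#A#})
          \<Longrightarrow> GrzSeq (\<Gamma> + image_mset Box \<Pi>, add_mset (Box A) \<Delta>)"

text \<open>A (possibly infinite) tree is a prefix-closed set of positions (lists of child indices);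
  each node carries a sequent label and the name of the rule applied there.  For the rule (Box),
  child 0 is the left premise and child 1 the right premise.\<close>

datatype rule = RInit | RImpL | RImpR | RRefl | RBox

definition children_exactly :: "nat list set \<Rightarrow> nat list \<Rightarrow> nat set \<Rightarrow> bool" where
  "children_exactly T xs I \<longleftrightarrow> (\<forall>i. xs @ [i] \<in> T \<longleftrightarrow> i \<in> I)"

definition inf_local_ok :: "nat list set \<Rightarrow> (nat list \<Rightarrow> 'a seq) \<Rightarrow> (nat list \<Rightarrow> rule) \<Rightarrow> nat list \<Rightarrow> bool" where
  "inf_local_ok T lab rl xs \<longleftrightarrow>
     (case rl xs of
        RInit \<Rightarrow> children_exactly T xs {} \<and>
                 ((\<exists>p \<Gamma> \<Delta>. lab xs = (add_mset (At p) \<Gamma>, add_mset (At p) \<Delta>)) \<or>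
                  (\<exists>\<Gamma> \<Delta>. lab xs = (add_mset Bot \<Gamma>, \<Delta>)))
      | RImpL \<Rightarrow> children_exactly T xs {0, 1} \<and>
                 (\<exists>\<Gamma> \<Delta> A B. lab xs = (add_mset (Imp A B) \<Gamma>, \<Delta>) \<and>
                    lab (xs @ [0]) = (add_mset B \<Gamma>, \<Delta>) \<and> lab (xs @ [1]) = (\<Gamma>, add_mset A \<Delta>))
      | RImpR \<Rightarrow> children_exactly T xs {0} \<and>
                 (\<exists>\<Gamma> \<Delta> A B. lab xs = (\<Gamma>, add_mset (Imp A B) \<Delta>) \<and>
                    lab (xs @ [0]) = (add_mset A \<Gamma>, add_mset B \<Delta>))
      | RRefl \<Rightarrow> children_exactly T xs {0} \<and>
                 (\<exists>\<Gamma> \<Delta> B. lab xs = (add_mset (Box B) \<Gamma>, \<Delta>) \<and>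
                    lab (xs @ [0]) = (add_mset B (add_mset (Box B) \<Gamma>), \<Delta>))
      | RBox \<Rightarrow> children_exactly T xs {0, 1} \<and>
                 (\<exists>\<Gamma> \<Delta> \<Pi> A. lab xs = (\<Gamma> + image_mset Box \<Pi>, add_mset (Box A) \<Delta>) \<and>
                    lab (xs @ [0]) = (\<Gamma> + image_mset Box \<Pi>, add_mset A \<Delta>) \<and>
                    lab (xs @ [1]) = (image_mset Box \<Pi>, {#A#})))"

definition inf_branch :: "nat list set \<Rightarrow> (nat \<Rightarrow> nat) \<Rightarrow> bool" where
  "inf_branch T f \<longleftrightarrow> (\<forall>n. map f [0..<n] \<in> T)"

definition inf_proof :: "nat list set \<Rightarrow> (nat list \<Rightarrow> 'a seq) \<Rightarrow> (nat list \<Rightarrow> rule) \<Rightarrow> bool" where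
  "inf_proof T lab rl \<longleftrightarrow>
     [] \<in> T \<and> (\<forall>xs i. xs @ [i] \<in> T \<longrightarrow> xs \<in> T) \<and>
     (\<forall>xs\<in>T. inf_local_ok T lab rl xs) \<and>
     (\<forall>f. inf_branch T f \<longrightarrow>
          (\<forall>m. \<exists>n\<ge>m. rl (map f [0..<n]) = RBox \<and> f n = 1))"

definition GrzInf :: "'a seq \<Rightarrow> bool" where
  "GrzInf S \<longleftrightarrow> (\<exists>T lab rl. inf_proof T lab rl \<and> lab [] = S)"

end

theory Submission
  imports Defs
begin

text \<open>Translate the \<infinity>-proof bottom-up, carrying the set \<Lambda> of formulas A whose diagonal
  hypothesis \<box>(A \<rightarrow> \<box>A) is already on the left.  Above a right premise of (\<box>) with principal
  formula A the rule (\<box>Grz) adds A to \<Lambda>; if A is already in \<Lambda>, the diagonal hypothesis lets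
  the left premise alone justify \<box>A, so no right premise is needed.  Hence the proof is by
  induction on the number of subformulas of the root outside \<Lambda> and, inside, by well-founded
  induction along the tree with right premises of (\<box>) removed, which has no infinite branches.\<close>

fun subfmls :: "'a fm \<Rightarrow> 'a fm set" where
  "subfmls Bot = {Bot}"
| "subfmls (At p) = {At p}"
| "subfmls (Imp A B) = insert (Imp A B) (subfmls A \<union> subfmls B)"
| "subfmls (Box A) = insert (Box A) (subfmls A)"

lemma finite_subfmls: "finite (subfmls A)"
  by (induction A) auto

lemma subfmls_refl: "A \<in> subfmls A"
  by (cases A) auto

definition seq_subfmls :: "'a seq \<Rightarrow> 'a fm set" where
  "seq_subfmls S = \<Union> (subfmls ` (set_mset (fst S) \<union> set_mset (snd S)))"

lemma finite_seq_subfmls: "finite (seq_subfmls S)"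
  by (auto simp: seq_subfmls_def finite_subfmls)

definition lam_star :: "'a fm set \<Rightarrow> 'a fm multiset" where
  "lam_star L = image_mset (\<lambda>A. Box (Imp A (Box A))) (mset_set L)"


lemma GrzSeq_weaken: "GrzSeq S \<Longrightarrow> GrzSeq (fst S + G, snd S + D)"
proof (induction S arbitrary: G D rule: GrzSeq.induct)
  case (ax A \<Gamma> \<Delta>)
  show ?case using GrzSeq.ax[of A "\<Gamma> + G" "\<Delta> + D"] by simp
next
  case (botL \<Gamma> \<Delta>)
  show ?case using GrzSeq.botL[of "\<Gamma> + G" "\<Delta> + D"] by simp
next
  case (impL B \<Gamma> \<Delta> A)
  then show ?case using GrzSeq.impL[of B "\<Gamma> + G" "\<Delta> + D" A] by simp
next
  case (impR A \<Gamma> B \<Delta>)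
  then show ?case using GrzSeq.impR[of A "\<Gamma> + G" B "\<Delta> + D"] by simp
next
  case (refl B \<Gamma> \<Delta>)
  then show ?case using GrzSeq.refl[of B "\<Gamma> + G" "\<Delta> + D"] by simp
next
  case (boxGrz A \<Pi> \<Gamma> \<Delta>)
  then show ?case using GrzSeq.boxGrz[of A \<Pi> "\<Gamma> + G" "\<Delta> + D"] by (simp add: ac_simps)
qed

lemma GrzSeq_BoxR_from_diag_hyp:
  assumes "GrzSeq (add_mset (Box (Imp A (Box A))) \<Gamma>, add_mset A \<Delta>)"
  shows "GrzSeq (add_mset (Box (Imp A (Box A))) \<Gamma>, add_mset (Box A) \<Delta>)"
proof -
  let ?H = "Box (Imp A (Box A))"
  have "GrzSeq (add_mset ?H \<Gamma>, add_mset A \<Delta> + {#Box A#})"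
    using GrzSeq_weaken[OF assms, of "{#}" "{#Box A#}"] by simp
  then have A_or_BoxA: "GrzSeq (add_mset ?H \<Gamma>, add_mset A (add_mset (Box A) \<Delta>))"
    by (simp add: add_mset_commute)
  have "GrzSeq (add_mset (Box A) (add_mset ?H \<Gamma>), add_mset (Box A) \<Delta>)"
    by (rule GrzSeq.ax)
  from GrzSeq.impL[OF this A_or_BoxA]
  show ?thesis by (rule GrzSeq.refl)
qed

lemma GrzSeq_boxGrz_lam_star:
  assumes "GrzSeq (add_mset (Box (Imp A (Box A))) (lam_star L + image_mset Box \<Pi>), {#A#})"
  shows "GrzSeq (lam_star L + (\<Gamma> + image_mset Box \<Pi>), add_mset (Box A) \<Delta>)"
proof -
  define \<Pi>' where "\<Pi>' = image_mset (\<lambda>A. Imp A (Box A)) (mset_set L) + \<Pi>"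
  have \<Pi>': "image_mset Box \<Pi>' = lam_star L + image_mset Box \<Pi>"
    by (simp add: \<Pi>'_def lam_star_def multiset.map_comp comp_def)
  have "GrzSeq (\<Gamma> + image_mset Box \<Pi>', add_mset (Box A) \<Delta>)"
    by (rule GrzSeq.boxGrz) (simp add: \<Pi>' assms)
  then show ?thesis by (simp add: \<Pi>' ac_simps)
qed


lemma prefix_closed_append:
  assumes "\<forall>xs i. xs @ [i] \<in> T \<longrightarrow> xs \<in> T" and "xs @ ys \<in> T"
  shows "xs \<in> T"
  using assms(2)
proof (induction ys rule: rev_induct)
  case (snoc y ys)
  then show ?case using assms(1) by (metis append_assoc)
qed simp

lemma seq_subfmls_child:
  assumes "inf_local_ok T lab rl xs" "xs @ [i] \<in> T"
  shows "seq_subfmls (lab (xs @ [i])) \<subseteq> seq_subfmls (lab xs)"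
  using assms
  by (cases "rl xs") (auto simp: inf_local_ok_def children_exactly_def seq_subfmls_def)

lemma seq_subfmls_node:
  assumes P: "inf_proof T lab rl" and "xs \<in> T"
  shows "seq_subfmls (lab xs) \<subseteq> seq_subfmls (lab [])"
  using assms(2)
proof (induction xs rule: rev_induct)
  case (snoc x xs)
  have "xs \<in> T" using P snoc.prems by (auto simp: inf_proof_def)
  then have "seq_subfmls (lab (xs @ [x])) \<subseteq> seq_subfmls (lab xs)"
    using P snoc.prems by (intro seq_subfmls_child) (auto simp: inf_proof_def)
  then show ?case using snoc.IH \<open>xs \<in> T\<close> by blast
qed simp

definition non_right_box_child :: "nat list set \<Rightarrow> (nat list \<Rightarrow> rule) \<Rightarrow> (nat list \<times> nat list) set" where
  "non_right_box_child T rl = {(ys, xs). \<exists>i. ys = xs @ [i] \<and> ys \<in> T \<and> \<not> (rl xs = RBox \<and> i = 1)}"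

lemma wf_non_right_box_child:
  assumes P: "inf_proof T lab rl"
  shows "wf (non_right_box_child T rl)"
proof (rule ccontr)
  assume "\<not> wf (non_right_box_child T rl)"
  then obtain f where "\<forall>k. (f (Suc k), f k) \<in> non_right_box_child T rl"
    using wf_iff_no_infinite_down_chain by blast
  then have "\<forall>k. \<exists>i. f (Suc k) = f k @ [i] \<and> f (Suc k) \<in> T \<and> \<not> (rl (f k) = RBox \<and> i = 1)"
    unfolding non_right_box_child_def by blast
  then obtain c where c: "\<And>k. f (Suc k) = f k @ [c k]" "\<And>k. f (Suc k) \<in> T"
    "\<And>k. \<not> (rl (f k) = RBox \<and> c k = 1)"
    by metis
  have prefix_closed: "\<forall>xs i. xs @ [i] \<in> T \<longrightarrow> xs \<in> T"
    using P by (simp add: inf_proof_def)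
  have f_T: "f k \<in> T" for k
    using c(2)[of k] prefix_closed unfolding c(1) by blast
  have f_eq: "f k = f 0 @ map c [0..<k]" for k
    by (induction k) (simp_all add: c(1))
  define m where "m = length (f 0)"
  define g where "g k = (if k < m then f 0 ! k else c (k - m))" for k
  have g_prefix: "map g [0..<n] = (if n \<le> m then take n (f 0) else f (n - m))" for n
  proof (cases "n \<le> m")
    case False
    then show ?thesis by (subst f_eq) (auto intro!: nth_equalityI simp: g_def m_def nth_append)
  qed (auto intro!: nth_equalityI simp: g_def m_def)
  have "inf_branch T g"
    unfolding inf_branch_def
  proof
    fix n
    show "map g [0..<n] \<in> T"
    proof (cases "n \<le> m")
      case True
      have "take n (f 0) @ drop n (f 0) \<in> T" using f_T[of 0] by simp
      then show ?thesis
        using True g_prefix prefix_closed_append[OF prefix_closed] by metis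
    qed (simp add: g_prefix f_T)
  qed
  then obtain n where n: "n \<ge> m" "rl (map g [0..<n]) = RBox" "g n = 1"
    using P unfolding inf_proof_def by blast
  have "map g [0..<n] = f (n - m)"
    using g_prefix[of n] n(1) by (cases "n = m") (auto simp: m_def)
  moreover have "g n = c (n - m)"
    using n(1) by (simp add: g_def)
  ultimately show False using c(3)[of "n - m"] n by simp
qed


lemma GrzSeq_lam_star_node:
  assumes local: "inf_local_ok T lab rl xs" and "finite L"
    and children: "\<And>i. xs @ [i] \<in> T \<Longrightarrow> \<not> (rl xs = RBox \<and> i = 1) \<Longrightarrow>
          GrzSeq (lam_star L + fst (lab (xs @ [i])), snd (lab (xs @ [i])))"
    and right_box_premise: "\<And>A. xs @ [1] \<in> T \<Longrightarrow> A \<in> seq_subfmls (lab xs) \<Longrightarrow> A \<notin> L \<Longrightarrow>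
          GrzSeq (lam_star (insert A L) + fst (lab (xs @ [1])), snd (lab (xs @ [1])))"
  shows "GrzSeq (lam_star L + fst (lab xs), snd (lab xs))"
proof (cases "rl xs")
  case RInit
  then show ?thesis using local
    by (auto simp: inf_local_ok_def intro: GrzSeq.ax GrzSeq.botL)
next
  case RImpL
  then obtain \<Gamma> \<Delta> A B where "lab xs = (add_mset (Imp A B) \<Gamma>, \<Delta>)"
    "lab (xs @ [0]) = (add_mset B \<Gamma>, \<Delta>)" "lab (xs @ [1]) = (\<Gamma>, add_mset A \<Delta>)"
    "xs @ [0] \<in> T" "xs @ [1] \<in> T"
    using local by (auto simp: inf_local_ok_def children_exactly_def)
  then show ?thesis
    using children[of 0] children[of 1] RImpL GrzSeq.impL[of B "lam_star L + \<Gamma>" \<Delta> A] by simp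
next
  case RImpR
  then obtain \<Gamma> \<Delta> A B where "lab xs = (\<Gamma>, add_mset (Imp A B) \<Delta>)"
    "lab (xs @ [0]) = (add_mset A \<Gamma>, add_mset B \<Delta>)" "xs @ [0] \<in> T"
    using local by (auto simp: inf_local_ok_def children_exactly_def)
  then show ?thesis
    using children[of 0] RImpR GrzSeq.impR[of A "lam_star L + \<Gamma>" B \<Delta>] by simp
next
  case RRefl
  then obtain \<Gamma> \<Delta> B where "lab xs = (add_mset (Box B) \<Gamma>, \<Delta>)"
    "lab (xs @ [0]) = (add_mset B (add_mset (Box B) \<Gamma>), \<Delta>)" "xs @ [0] \<in> T"
    using local by (auto simp: inf_local_ok_def children_exactly_def)
  then show ?thesis
    using children[of 0] RRefl GrzSeq.refl[of B "lam_star L + \<Gamma>" \<Delta>] by simp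
next
  case RBox
  then obtain \<Gamma> \<Delta> \<Pi> A where lab: "lab xs = (\<Gamma> + image_mset Box \<Pi>, add_mset (Box A) \<Delta>)"
    "lab (xs @ [0]) = (\<Gamma> + image_mset Box \<Pi>, add_mset A \<Delta>)"
    "lab (xs @ [1]) = (image_mset Box \<Pi>, {#A#})" and "xs @ [0] \<in> T" "xs @ [1] \<in> T"
    using local by (auto simp: inf_local_ok_def children_exactly_def)
  show ?thesis
  proof (cases "A \<in> L")
    case True
    have "Box (Imp A (Box A)) \<in># lam_star L"
      using \<open>finite L\<close> True by (simp add: lam_star_def)
    then obtain L' where L': "lam_star L = add_mset (Box (Imp A (Box A))) L'"
      by (meson multi_member_split)
    have "GrzSeq (lam_star L + (\<Gamma> + image_mset Box \<Pi>), add_mset A \<Delta>)"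
      using children[of 0] lab \<open>xs @ [0] \<in> T\<close> by simp
    then show ?thesis
      using GrzSeq_BoxR_from_diag_hyp[of A "L' + (\<Gamma> + image_mset Box \<Pi>)" \<Delta>] lab L' by simp
  next
    case False
    have "A \<in> seq_subfmls (lab xs)" using lab by (auto simp: seq_subfmls_def subfmls_refl)
    then have "GrzSeq (add_mset (Box (Imp A (Box A))) (lam_star L + image_mset Box \<Pi>), {#A#})"
      using right_box_premise[of A] \<open>xs @ [1] \<in> T\<close> False lab \<open>finite L\<close> by (simp add: lam_star_def)
    then show ?thesis using lab GrzSeq_boxGrz_lam_star by simp
  qed
qed

lemma GrzSeq_lam_star_inf_proof:
  assumes P: "inf_proof T lab rl" and "finite L" "xs \<in> T"
  shows "GrzSeq (lam_star L + fst (lab xs), snd (lab xs))"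
  using assms(2,3)
proof (induction "card (seq_subfmls (lab []) - L)" arbitrary: L xs rule: less_induct)
  case less
  have "xs \<in> T \<longrightarrow> GrzSeq (lam_star L + fst (lab xs), snd (lab xs))"
  proof (induction xs rule: wf_induct[OF wf_non_right_box_child[OF P]])
    case (1 xs)
    show ?case
    proof
      assume "xs \<in> T"
      show "GrzSeq (lam_star L + fst (lab xs), snd (lab xs))"
      proof (rule GrzSeq_lam_star_node[OF _ \<open>finite L\<close>])
        show "inf_local_ok T lab rl xs" using P \<open>xs \<in> T\<close> by (simp add: inf_proof_def)
        show "GrzSeq (lam_star L + fst (lab (xs @ [i])), snd (lab (xs @ [i])))"
          if "xs @ [i] \<in> T" "\<not> (rl xs = RBox \<and> i = 1)" for i
          using 1 that by (auto simp: non_right_box_child_def)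
      next
        fix A assume A: "xs @ [1] \<in> T" "A \<in> seq_subfmls (lab xs)" "A \<notin> L"
        have "A \<in> seq_subfmls (lab [])"
          using A seq_subfmls_node[OF P \<open>xs \<in> T\<close>] by blast
        then have "seq_subfmls (lab []) - insert A L \<subset> seq_subfmls (lab []) - L"
          using A by blast
        then have "card (seq_subfmls (lab []) - insert A L) < card (seq_subfmls (lab []) - L)"
          by (simp add: psubset_card_mono finite_seq_subfmls)
        then show "GrzSeq (lam_star (insert A L) + fst (lab (xs @ [1])), snd (lab (xs @ [1])))"
          using less.hyps A(1) \<open>finite L\<close> by simp
      qed
    qed
  qed
  then show ?case using less.prems by blast
qed

theorem lemma3p5:
  fixes \<Gamma> \<Delta> :: "'a fm multiset" and \<Lambda> :: "'a fm set"
  assumes "GrzInf (\<Gamma>, \<Delta>)"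
    and "finite \<Lambda>"
  shows "GrzSeq (image_mset (\<lambda>A. Box (Imp A (Box A))) (mset_set \<Lambda>) + \<Gamma>, \<Delta>)"
proof -
  obtain T lab rl where P: "inf_proof T lab rl" and root: "lab [] = (\<Gamma>, \<Delta>)"
    using assms(1) unfolding GrzInf_def by blast
  have "[] \<in> T" using P by (simp add: inf_proof_def)
  from GrzSeq_lam_star_inf_proof[OF P assms(2) this]
  show ?thesis using root by (simp add: lam_star_def)
qed

end
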